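(* Let $\psi$ be an $n$-dimensional unique sink orientation and let $C$ be a directed cycle in $\psi$ whose edges span every coordinate $1,\dots,n$. Then every vertex $v$ of $C$ has $r_\psi(v) = [n]$.
   Context: Let $Q^n = 2^{[n]}$ be the vertex set of the $n$-cube, with $u,v$ adjacent iff $|u\oplus v|=1$; the edge $\{v, v\oplus\{j\}\}$ is said to be in coordinate $j$. A unique sink orientation (USO) is an orientation of the cube's edges such that every nonempty face $F_{J,v}=\{u : v\oplus u\subseteq J\}$ has a unique sink. The outmap $s_\psi(v)$ is the set of coordinates $j$ such that the edge $\{v,v\oplus\{j\}\}$ is directed away from $v$. The reachmap is $r_\psi(v)=s_\psi(v)\cup\{j : \exists u \text{ reachable from } v \text{ by a directed path with } j\in s_\psi(u)\}$. A cycle spans coordinate $j$ if it contains an edge in coordinate $j$. *)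

theory Defs
  imports Main
begin

text \<open>Vertices of the n-cube are subsets of [n] = {1..n}.\<close>

definition symdiff :: "nat set \<Rightarrow> nat set \<Rightarrow> nat set" where
  "symdiff u v = (u - v) \<union> (v - u)"

definition cube :: "nat \<Rightarrow> nat set set" where
  "cube n = Pow {1..n}"

definition cube_adj :: "nat \<Rightarrow> nat set \<Rightarrow> nat set \<Rightarrow> bool" where
  "cube_adj n u v \<longleftrightarrow> u \<in> cube n \<and> v \<in> cube n \<and> card (symdiff u v) = 1"

text \<open>An orientation: E u v means the edge {u,v} is directed from u to v.\<close>
definition orientation :: "nat \<Rightarrow> (nat set \<Rightarrow> nat set \<Rightarrow> bool) \<Rightarrow> bool" where
  "orientation n E \<longleftrightarrow>
     (\<forall>u v. E u v \<longrightarrow> cube_adj n u v) \<and>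
     (\<forall>u v. cube_adj n u v \<longrightarrow> (E u v \<longleftrightarrow> \<not> E v u))"

definition face :: "nat \<Rightarrow> nat set \<Rightarrow> nat set \<Rightarrow> nat set set" where
  "face n J v = {u \<in> cube n. symdiff v u \<subseteq> J}"

definition is_sink_of :: "(nat set \<Rightarrow> nat set \<Rightarrow> bool) \<Rightarrow> nat set set \<Rightarrow> nat set \<Rightarrow> bool" where
  "is_sink_of E F u \<longleftrightarrow> u \<in> F \<and> (\<forall>w\<in>F. \<not> E u w)"

definition USO :: "nat \<Rightarrow> (nat set \<Rightarrow> nat set \<Rightarrow> bool) \<Rightarrow> bool" where
  "USO n E \<longleftrightarrow> orientation n E \<and>
     (\<forall>J v. J \<subseteq> {1..n} \<longrightarrow> v \<in> cube n \<longrightarrow> (\<exists>!u. is_sink_of E (face n J v) u))"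

definition outmap :: "nat \<Rightarrow> (nat set \<Rightarrow> nat set \<Rightarrow> bool) \<Rightarrow> nat set \<Rightarrow> nat set" where
  "outmap n E v = {j \<in> {1..n}. E v (symdiff v {j})}"

definition reachmap :: "nat \<Rightarrow> (nat set \<Rightarrow> nat set \<Rightarrow> bool) \<Rightarrow> nat set \<Rightarrow> nat set" where
  "reachmap n E v = outmap n E v \<union> {j. \<exists>u. E\<^sup>*\<^sup>* v u \<and> j \<in> outmap n E u}"

definition directed_cycle :: "(nat set \<Rightarrow> nat set \<Rightarrow> bool) \<Rightarrow> nat set list \<Rightarrow> bool" where
  "directed_cycle E cs \<longleftrightarrow> cs \<noteq> [] \<and> distinct cs \<and>
     (\<forall>i < length cs. E (cs ! i) (cs ! ((i + 1) mod length cs)))"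

definition cycle_spans :: "nat set list \<Rightarrow> nat \<Rightarrow> bool" where
  "cycle_spans cs j \<longleftrightarrow>
     (\<exists>i < length cs. symdiff (cs ! i) (cs ! ((i + 1) mod length cs)) = {j})"

end

theory Submission
  imports Defs
begin

text \<open>Every vertex of a directed cycle reaches every other vertex of it, and an edge of the
  cycle in coordinate j is an outgoing j-edge of its tail. Hence every coordinate spanned by
  the cycle lies in the reachmap of each of its vertices.\<close>

lemma symdiff_eq_singleton_imp:
  assumes "symdiff u w = {j}"
  shows "w = symdiff u {j}"
proof -
  have "x \<in> symdiff u w \<longleftrightarrow> x = j" for x
    using assms by auto
  then show ?thesis
    unfolding symdiff_def by blast
qed

lemma reachmap_subset: "reachmap n E v \<subseteq> {1..n}"
  unfolding reachmap_def outmap_def by auto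

lemma directed_cycle_arc:
  assumes "directed_cycle E cs" "i < length cs"
  shows "E (cs ! i) (cs ! ((i + 1) mod length cs))"
  using assms unfolding directed_cycle_def by blast

lemma directed_cycle_rtranclp_shift:
  assumes "directed_cycle E cs" "k < length cs"
  shows "E\<^sup>*\<^sup>* (cs ! k) (cs ! ((k + m) mod length cs))"
proof (induction m)
  case 0
  then show ?case using assms(2) by simp
next
  case (Suc m)
  have "(k + m) mod length cs < length cs"
    using assms(2) by (metis mod_less_divisor gr_implies_not0 neq0_conv)
  then have "E (cs ! ((k + m) mod length cs)) (cs ! (((k + m) mod length cs + 1) mod length cs))"
    by (rule directed_cycle_arc[OF assms(1)])
  moreover have "((k + m) mod length cs + 1) mod length cs = (k + Suc m) mod length cs"
    by (simp add: mod_Suc_eq)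
  ultimately show ?case
    using Suc by (metis rtranclp.rtrancl_into_rtrancl)
qed

lemma directed_cycle_rtranclp:
  assumes "directed_cycle E cs" "u \<in> set cs" "w \<in> set cs"
  shows "E\<^sup>*\<^sup>* u w"
proof -
  obtain k i where k: "k < length cs" "u = cs ! k" and i: "i < length cs" "w = cs ! i"
    using assms(2,3) by (metis in_set_conv_nth)
  have "(k + (i + length cs - k)) mod length cs = i"
    using k(1) i(1) by simp
  then show ?thesis
    using directed_cycle_rtranclp_shift[OF assms(1) k(1), of "i + length cs - k"] k(2) i(2)
    by simp
qed

lemma cycle_spans_imp_in_outmap:
  assumes "directed_cycle E cs" "cycle_spans cs j" "j \<in> {1..n}"
  obtains u where "u \<in> set cs" "j \<in> outmap n E u"
proof -
  obtain i where i: "i < length cs" "symdiff (cs ! i) (cs ! ((i + 1) mod length cs)) = {j}"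
    using assms(2) unfolding cycle_spans_def by blast
  have "E (cs ! i) (symdiff (cs ! i) {j})"
    using directed_cycle_arc[OF assms(1) i(1)] symdiff_eq_singleton_imp[OF i(2)] by simp
  then show ?thesis
    using that[of "cs ! i"] i(1) assms(3) unfolding outmap_def by simp
qed

theorem lemma11:
  fixes n :: nat and E :: "nat set \<Rightarrow> nat set \<Rightarrow> bool" and cs :: "nat set list"
  assumes "USO n E"
    and "directed_cycle E cs"
    and "\<forall>j \<in> {1..n}. cycle_spans cs j"
  shows "\<forall>v \<in> set cs. reachmap n E v = {1..n}"
proof (intro ballI equalityI subsetI)
  fix v j
  assume v: "v \<in> set cs" and j: "j \<in> {1..n}"
  then obtain u where u: "u \<in> set cs" "j \<in> outmap n E u"
    using cycle_spans_imp_in_outmap[OF assms(2)] assms(3) by blast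
  then have "E\<^sup>*\<^sup>* v u"
    using directed_cycle_rtranclp[OF assms(2) v] by blast
  with u show "j \<in> reachmap n E v"
    unfolding reachmap_def by blast
qed (use reachmap_subset in blast)

end
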